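(* Let $\gamma>0$, $q\in L^1(0,\infty)$ and $R>0$. Let $\lambda\in\mathbb C\setminus[0,\infty)$ with $\lambda\neq i\gamma$. Then $\lambda$ is an eigenvalue of $H_R$ if and only if $f_R(\lambda)=0$, where $$f_R(\lambda):=\psi_-(0,\lambda-i\gamma)\big(\sqrt{\lambda}-\sqrt{\lambda-i\gamma}+\mathcal E_1(R,\lambda)\big)e^{i\sqrt{\lambda-i\gamma}R}-\psi_+(0,\lambda-i\gamma)\big(\sqrt{\lambda}+\sqrt{\lambda-i\gamma}+\mathcal E_2(R,\lambda)\big)e^{-i\sqrt{\lambda-i\gamma}R},$$ with, for $\lambda\in\mathbb C\setminus\{0,i\gamma\}$, $$\mathcal E_1(R,\lambda)=\sqrt{\lambda}\big(E_+(R,\lambda-i\gamma)+E^d_+(R,\lambda)+E_+(R,\lambda-i\gamma)E^d_+(R,\lambda)\big)-\sqrt{\lambda-i\gamma}\big(E^d_+(R,\lambda-i\gamma)+E_+(R,\lambda)+E^d_+(R,\lambda-i\gamma)E_+(R,\lambda)\big),$$ $$\mathcal E_2(R,\lambda)=\sqrt{\lambda}\big(E^d_+(R,\lambda)+E_-(R,\lambda-i\gamma)+E^d_+(R,\lambda)E_-(R,\lambda-i\gamma)\big)+\sqrt{\lambda-i\gamma}\big(E_+(R,\lambda)+E^d_-(R,\lambda-i\gamma)+E_+(R,\lambda)E^d_-(R,\lambda-i\gamma)\big).$$ Moreover, there is a constant $\mathcal C_1=\mathcal C_1(q,\gamma)>0$ such that $|\mathcal E_1(R,\lambda)|+|\mathcal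 E_2(R,\lambda)|\le\mathcal C_1$ for all $R>0$ and all $\lambda\in\mathbb C$ with $|\lambda|\ge1+\gamma$; and $f_R$, $\mathcal E_1(R,\cdot)$, $\mathcal E_2(R,\cdot)$ are analytic on $\mathbb C\setminus\big([0,\infty)\cup(i\gamma+[0,\infty))\big)$.
   Context: Fix $\gamma>0$ and $q\in L^1(0,\infty)$. For $R>0$, $H_R=-\frac{d^2}{dx^2}+q+i\gamma\chi_{[0,R]}$ on $L^2(0,\infty)$ with Dirichlet boundary condition at $0$ ($\chi_{[0,R]}$ the indicator function of $[0,R]$). The square root has its branch cut along $[0,\infty)$, so $\operatorname{Im}\sqrt z\ge0$ for all $z\in\mathbb C$. By Levinson's asymptotic theorem, for each $\lambda\in\mathbb C\setminus\{0\}$ the solution space of $-u''+qu=\lambda u$ on $[0,\infty)$ is spanned by two solutions $\psi_\pm(\cdot,\lambda)$ of the form $\psi_\pm(x,\lambda)=e^{\pm i\sqrt\lambda x}(1+E_\pm(x,\lambda))$, $\psi_\pm'(x,\lambda)=\pm i\sqrt\lambda e^{\pm i\sqrt\lambda x}(1+E^d_\pm(x,\lambda))$ (prime denotes $d/dx$), where $|E_\pm(x,\lambda)|+|E^d_\pm(x,\lambda)|\to0$ as $x\to\infty$ for each $\lambda\ne0$, $|E_\pm(x,\lambda)|+|E_\pm^d(x,\lambda)|\le C(q)/\sqrt{|\lambda|}$ for all $x\ge0$ and $|\lambda|\ge1$, and $E_\pm(x,\cdot)$, $E^d_\pm(x,\cdot)$ are analytic on $\mathbb C\setminus[0,\infty)$;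 these $\psi_\pm$, $E_\pm$, $E_\pm^d$ are fixed throughout. *)

theory Defs
  imports "HOL-Complex_Analysis.Complex_Analysis"
begin

text \<open>Square root with branch cut along [0,\<infinity>), so that Im (sqrt z) \<ge> 0.
  On the cut itself we take the nonnegative real root.\<close>
definition csqrt_up :: "complex \<Rightarrow> complex" where
  "csqrt_up z = (if Im z = 0 \<and> Re z \<ge> 0 then complex_of_real (sqrt (Re z))
                 else \<i> * csqrt (- z))"

definition nonneg_axis :: "complex set" where
  "nonneg_axis = complex_of_real ` {0..}"

text \<open>(u, u') is a (Caratheodory) solution on [0,\<infinity>) of  -u'' + V u = z u :
  u and u' are locally absolutely continuous, u' is the derivative of u and
  u'' = (V - z) u almost everywhere, written in integral form.\<close>
definition solves :: "(real \<Rightarrow> complex) \<Rightarrow> complex \<Rightarrow> (real \<Rightarrow> complex) \<Rightarrow> (real \<Rightarrow> complex) \<Rightarrow> bool" where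
  "solves V z u u' \<longleftrightarrow>
     (\<forall>x\<ge>0. set_integrable lborel {0..x} u'
          \<and> set_integrable lborel {0..x} (\<lambda>t. (V t - z) * u t)
          \<and> u x = u 0 + (LINT t:{0..x}|lborel. u' t)
          \<and> u' x = u' 0 + (LINT t:{0..x}|lborel. (V t - z) * u t))"

text \<open>\<lambda> is an eigenvalue of H_R = -d^2/dx^2 + q + i\<gamma>\<chi>_[0,R] on L^2(0,\<infinity>) with
  Dirichlet condition at 0: there is a nonzero L^2 solution of H_R u = lam u in the
  operator domain with u(0) = 0.\<close>
definition is_eigenvalue_HR :: "(real \<Rightarrow> complex) \<Rightarrow> real \<Rightarrow> real \<Rightarrow> complex \<Rightarrow> bool" where
  "is_eigenvalue_HR q \<gamma> R lam \<longleftrightarrow>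
     (\<exists>u u'. solves (\<lambda>t. q t + \<i> * complex_of_real \<gamma> * indicator {0..R} t) lam u u'
          \<and> u 0 = 0
          \<and> set_integrable lborel {0..} (\<lambda>x. (cmod (u x))\<^sup>2)
          \<and> (\<exists>x\<ge>0. u x \<noteq> 0))"

definition psi_p :: "(real \<Rightarrow> complex \<Rightarrow> complex) \<Rightarrow> real \<Rightarrow> complex \<Rightarrow> complex" where
  "psi_p Ep x lam = exp (\<i> * csqrt_up lam * complex_of_real x) * (1 + Ep x lam)"

definition psi_m :: "(real \<Rightarrow> complex \<Rightarrow> complex) \<Rightarrow> real \<Rightarrow> complex \<Rightarrow> complex" where
  "psi_m Em x lam = exp (- \<i> * csqrt_up lam * complex_of_real x) * (1 + Em x lam)"

definition dpsi_p :: "(real \<Rightarrow> complex \<Rightarrow> complex) \<Rightarrow> real \<Rightarrow> complex \<Rightarrow> complex" where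
  "dpsi_p Edp x lam = \<i> * csqrt_up lam * exp (\<i> * csqrt_up lam * complex_of_real x) * (1 + Edp x lam)"

definition dpsi_m :: "(real \<Rightarrow> complex \<Rightarrow> complex) \<Rightarrow> real \<Rightarrow> complex \<Rightarrow> complex" where
  "dpsi_m Edm x lam = - \<i> * csqrt_up lam * exp (- \<i> * csqrt_up lam * complex_of_real x) * (1 + Edm x lam)"

definition calE1 :: "(real \<Rightarrow> complex \<Rightarrow> complex) \<Rightarrow> (real \<Rightarrow> complex \<Rightarrow> complex) \<Rightarrow> real \<Rightarrow> real \<Rightarrow> complex \<Rightarrow> complex" where
  "calE1 Ep Edp \<gamma> R lam =
     (let \<mu> = lam - \<i> * complex_of_real \<gamma> in
      csqrt_up lam * (Ep R \<mu> + Edp R lam + Ep R \<mu> * Edp R lam)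
      - csqrt_up \<mu> * (Edp R \<mu> + Ep R lam + Edp R \<mu> * Ep R lam))"

definition calE2 :: "(real \<Rightarrow> complex \<Rightarrow> complex) \<Rightarrow> (real \<Rightarrow> complex \<Rightarrow> complex) \<Rightarrow> (real \<Rightarrow> complex \<Rightarrow> complex) \<Rightarrow> (real \<Rightarrow> complex \<Rightarrow> complex) \<Rightarrow> real \<Rightarrow> real \<Rightarrow> complex \<Rightarrow> complex" where
  "calE2 Ep Em Edp Edm \<gamma> R lam =
     (let \<mu> = lam - \<i> * complex_of_real \<gamma> in
      csqrt_up lam * (Edp R lam + Em R \<mu> + Edp R lam * Em R \<mu>)
      + csqrt_up \<mu> * (Ep R lam + Edm R \<mu> + Ep R lam * Edm R \<mu>))"

definition fR :: "(real \<Rightarrow> complex \<Rightarrow> complex) \<Rightarrow> (real \<Rightarrow> complex \<Rightarrow> complex) \<Rightarrow> (real \<Rightarrow> complex \<Rightarrow> complex) \<Rightarrow> (real \<Rightarrow> complex \<Rightarrow> complex) \<Rightarrow> real \<Rightarrow> real \<Rightarrow> complex \<Rightarrow> complex" where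
  "fR Ep Em Edp Edm \<gamma> R lam =
     (let \<mu> = lam - \<i> * complex_of_real \<gamma> in
      psi_m Em 0 \<mu> * (csqrt_up lam - csqrt_up \<mu> + calE1 Ep Edp \<gamma> R lam)
        * exp (\<i> * csqrt_up \<mu> * complex_of_real R)
      - psi_p Ep 0 \<mu> * (csqrt_up lam + csqrt_up \<mu> + calE2 Ep Em Edp Edm \<gamma> R lam)
        * exp (- \<i> * csqrt_up \<mu> * complex_of_real R))"

end

theory Submission
  imports Defs
begin

(* On [0, R] the equation for H_R is the unperturbed one at the shifted parameter
   mu = lam - i gamma, so an eigenfunction (which vanishes at 0) is there a multiple of the
   regular solution psi_-(0, mu) psi_+(., mu) - psi_+(0, mu) psi_-(., mu).  On (R, oo) it is a
   combination of psi_+(., lam) and psi_-(., lam); since Im (sqrt lam) > 0 the first decays and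
   the second grows exponentially, so square integrability leaves only psi_+(., lam).  Hence lam
   is an eigenvalue iff these two solutions match in C^1 at R, i.e. iff their Wronskian at R
   vanishes, and expanding that Wronskian gives i e^(i sqrt lam R) f_R(lam).  All Wronskian
   identities come from an integration by parts for indefinite Lebesgue integrals.  The bound on
   E_1, E_2 is termwise, as |lam| and |lam - i gamma| are comparable for |lam| >= 1 + gamma. *)

lemma set_integral_atLeastLessThan_eq_atLeastAtMost:
  fixes g :: "real \<Rightarrow> complex"
  shows "(LINT t:{a..<b}|lborel. g t) = (LINT t:{a..b}|lborel. g t)"
  by (rule set_integral_discrete_difference[where X="{b}"]) auto

lemma integrable_lborel_pair_mult:
  fixes F G :: "real \<Rightarrow> complex"
  assumes F: "integrable lborel F" and G: "integrable lborel G"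
  shows "integrable (lborel \<Otimes>\<^sub>M lborel) (\<lambda>(s, t). F s * G t)"
proof (rule lborel_pair.Fubini_integrable)
  have [measurable]: "F \<in> borel_measurable lborel" "G \<in> borel_measurable lborel"
    using F G by auto
  show "(\<lambda>(s, t). F s * G t) \<in> borel_measurable (lborel \<Otimes>\<^sub>M lborel)"
    by measurable
  have "(\<lambda>s. \<integral>t. norm (F s * G t) \<partial>lborel) = (\<lambda>s. norm (F s) * (\<integral>t. norm (G t) \<partial>lborel))"
    by (simp add: norm_mult)
  then show "integrable lborel (\<lambda>s. \<integral>t. norm (case_prod (\<lambda>s t. F s * G t) (s, t)) \<partial>lborel)"
    using F by auto
  show "AE s in lborel. integrable lborel (\<lambda>t. case_prod (\<lambda>s t. F s * G t) (s, t))"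
    using G by auto
qed

lemma integral_lborel_triangle_split:
  fixes F G :: "real \<Rightarrow> complex"
  assumes F: "integrable lborel F" and G: "integrable lborel G"
  shows "integrable lborel (\<lambda>t. (\<integral>s. of_bool (s \<le> t) * F s \<partial>lborel) * G t)"
    and "integrable lborel (\<lambda>s. F s * (\<integral>t. of_bool (t < s) * G t \<partial>lborel))"
    and "(\<integral>t. (\<integral>s. of_bool (s \<le> t) * F s \<partial>lborel) * G t \<partial>lborel)
         + (\<integral>s. F s * (\<integral>t. of_bool (t < s) * G t \<partial>lborel) \<partial>lborel)
       = integral\<^sup>L lborel F * integral\<^sup>L lborel G"
proof -
  have [measurable]: "F \<in> borel_measurable lborel" "G \<in> borel_measurable lborel"
    using F G by auto
  define H1 where "H1 s t = of_bool (s \<le> t) * (F s * G t)" for s t :: real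
  define H2 where "H2 s t = of_bool (t < s) * (F s * G t)" for s t :: real
  note P = integrable_lborel_pair_mult[OF F G]
  have [measurable]: "case_prod H1 \<in> borel_measurable (lborel \<Otimes>\<^sub>M lborel)"
    "case_prod H2 \<in> borel_measurable (lborel \<Otimes>\<^sub>M lborel)"
    unfolding H1_def H2_def by measurable
  have H1: "integrable (lborel \<Otimes>\<^sub>M lborel) (case_prod H1)"
    by (rule Bochner_Integration.integrable_bound[OF P]) (auto simp: H1_def norm_mult)
  have H2: "integrable (lborel \<Otimes>\<^sub>M lborel) (case_prod H2)"
    by (rule Bochner_Integration.integrable_bound[OF P]) (auto simp: H2_def norm_mult)
  have inner1: "(\<integral>s. H1 s t \<partial>lborel) = (\<integral>s. of_bool (s \<le> t) * F s \<partial>lborel) * G t" for t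
    by (simp add: H1_def mult.assoc[symmetric])
  have inner2: "(\<integral>t. H2 s t \<partial>lborel) = F s * (\<integral>t. of_bool (t < s) * G t \<partial>lborel)" for s
    by (simp add: H2_def mult.left_commute)
  show "integrable lborel (\<lambda>t. (\<integral>s. of_bool (s \<le> t) * F s \<partial>lborel) * G t)"
    using lborel_pair.integrable_snd[OF H1] by (simp add: inner1)
  show "integrable lborel (\<lambda>s. F s * (\<integral>t. of_bool (t < s) * G t \<partial>lborel))"
    using lborel_pair.integrable_fst[OF H2] by (simp add: inner2)
  have "(\<integral>t. (\<integral>s. of_bool (s \<le> t) * F s \<partial>lborel) * G t \<partial>lborel)
         + (\<integral>s. F s * (\<integral>t. of_bool (t < s) * G t \<partial>lborel) \<partial>lborel)
      = integral\<^sup>L (lborel \<Otimes>\<^sub>M lborel) (case_prod H1) + integral\<^sup>L (lborel \<Otimes>\<^sub>M lborel) (case_prod H2)"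
    using lborel_pair.integral_snd[OF H1] lborel_pair.integral_fst[OF H2]
    by (simp add: inner1 inner2)
  also have "\<dots> = integral\<^sup>L (lborel \<Otimes>\<^sub>M lborel) (\<lambda>z. case_prod H1 z + case_prod H2 z)"
    using H1 H2 by simp
  also have "\<dots> = integral\<^sup>L (lborel \<Otimes>\<^sub>M lborel) (\<lambda>(s, t). F s * G t)"
    by (rule arg_cong[where f = "integral\<^sup>L _"]) (auto simp: H1_def H2_def fun_eq_iff)
  also have "\<dots> = integral\<^sup>L lborel F * integral\<^sup>L lborel G"
    using lborel_pair.integral_fst[OF P] by simp
  finally show "(\<integral>t. (\<integral>s. of_bool (s \<le> t) * F s \<partial>lborel) * G t \<partial>lborel)
         + (\<integral>s. F s * (\<integral>t. of_bool (t < s) * G t \<partial>lborel) \<partial>lborel)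
       = integral\<^sup>L lborel F * integral\<^sup>L lborel G" .
qed

lemma set_integral_indefinite_product_rule:
  fixes f g :: "real \<Rightarrow> complex"
  assumes f: "set_integrable lborel {0..x} f" and g: "set_integrable lborel {0..x} g"
  defines "h \<equiv> \<lambda>t. (LINT s:{0..t}|lborel. f s) * g t + f t * (LINT s:{0..t}|lborel. g s)"
  shows "set_integrable lborel {0..x} h"
    and "(LINT t:{0..x}|lborel. h t) = (LINT s:{0..x}|lborel. f s) * (LINT s:{0..x}|lborel. g s)"
proof -
  define F where "F s = indicator {0..x} s *\<^sub>R f s" for s
  define G where "G s = indicator {0..x} s *\<^sub>R g s" for s
  have Fi: "integrable lborel F" and Gi: "integrable lborel G"
    using f g unfolding F_def G_def set_integrable_def .
  note T = integral_lborel_triangle_split[OF Fi Gi]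
  have lower: "(\<integral>s. of_bool (s \<le> t) * F s \<partial>lborel) * G t
      = indicator {0..x} t *\<^sub>R ((LINT s:{0..t}|lborel. f s) * g t)" for t
  proof (cases "t \<in> {0..x}")
    case True
    then have "(\<lambda>s. of_bool (s \<le> t) * F s) = (\<lambda>s. indicator {0..t} s *\<^sub>R f s)"
      by (auto simp: F_def indicator_def fun_eq_iff)
    then show ?thesis
      using True by (simp add: G_def set_lebesgue_integral_def)
  qed (simp add: G_def)
  have upper: "F s * (\<integral>t. of_bool (t < s) * G t \<partial>lborel)
      = indicator {0..x} s *\<^sub>R (f s * (LINT t:{0..s}|lborel. g t))" for s
  proof (cases "s \<in> {0..x}")
    case True
    then have "(\<lambda>t. of_bool (t < s) * G t) = (\<lambda>t. indicator {0..<s} t *\<^sub>R g t)"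
      by (auto simp: G_def indicator_def fun_eq_iff)
    then show ?thesis
      using True
      by (simp add: F_def set_lebesgue_integral_def[symmetric]
          set_integral_atLeastLessThan_eq_atLeastAtMost)
  qed (simp add: F_def)
  have hsum: "indicator {0..x} t *\<^sub>R h t
      = (\<integral>s. of_bool (s \<le> t) * F s \<partial>lborel) * G t + F t * (\<integral>s. of_bool (s < t) * G s \<partial>lborel)" for t
    unfolding lower upper h_def by (simp add: scaleR_add_right)
  show "set_integrable lborel {0..x} h"
    unfolding set_integrable_def hsum using T(1,2) by (rule Bochner_Integration.integrable_add)
  show "(LINT t:{0..x}|lborel. h t) = (LINT s:{0..x}|lborel. f s) * (LINT s:{0..x}|lborel. g s)"
    unfolding set_lebesgue_integral_def hsum Bochner_Integration.integral_add[OF T(1,2)] T(3)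
    by (simp add: F_def[abs_def] G_def[abs_def])
qed

lemma set_integral_product_rule:
  fixes f g F G :: "real \<Rightarrow> complex"
  assumes f: "set_integrable lborel {0..x} f" and g: "set_integrable lborel {0..x} g"
    and F: "\<And>t. t \<in> {0..x} \<Longrightarrow> F t = F 0 + (LINT s:{0..t}|lborel. f s)"
    and G: "\<And>t. t \<in> {0..x} \<Longrightarrow> G t = G 0 + (LINT s:{0..t}|lborel. g s)"
    and x: "0 \<le> x"
  shows "set_integrable lborel {0..x} (\<lambda>t. F t * g t + f t * G t)"
    and "(LINT t:{0..x}|lborel. F t * g t + f t * G t) = F x * G x - F 0 * G 0"
proof -
  let ?If = "\<lambda>t. LINT s:{0..t}|lborel. f s"
  let ?Ig = "\<lambda>t. LINT s:{0..t}|lborel. g s"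
  note I = set_integral_indefinite_product_rule[OF f g]
  have split: "F t * g t + f t * G t = (F 0 * g t + f t * G 0) + (?If t * g t + f t * ?Ig t)"
    if "t \<in> {0..x}" for t
    using F[OF that] G[OF that] by (simp add: algebra_simps)
  have i0: "set_integrable lborel {0..x} (\<lambda>t. F 0 * g t + f t * G 0)"
    using f g by (intro set_integral_add) auto
  have "set_integrable lborel {0..x} (\<lambda>t. (F 0 * g t + f t * G 0) + (?If t * g t + f t * ?Ig t))"
    using i0 I(1) by (rule set_integral_add)
  then show "set_integrable lborel {0..x} (\<lambda>t. F t * g t + f t * G t)"
    by (rule set_integrable_cong[THEN iffD2, rotated 3]) (use split in auto)
  have "(LINT t:{0..x}|lborel. F t * g t + f t * G t)
      = (LINT t:{0..x}|lborel. (F 0 * g t + f t * G 0) + (?If t * g t + f t * ?Ig t))"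
    by (rule set_lebesgue_integral_cong) (use split in auto)
  also have "\<dots> = (F 0 * ?Ig x + ?If x * G 0) + ?If x * ?Ig x"
    using i0 I f g by (simp add: set_integral_add)
  also have "\<dots> = F x * G x - F 0 * G 0"
    using F[of x] G[of x] x by (simp add: algebra_simps)
  finally show "(LINT t:{0..x}|lborel. F t * g t + f t * G t) = F x * G x - F 0 * G 0" .
qed

lemma solvesD:
  assumes "solves V z u u'" and "0 \<le> x"
  shows "set_integrable lborel {0..x} u'"
    and "set_integrable lborel {0..x} (\<lambda>t. (V t - z) * u t)"
    and "u x = u 0 + (LINT t:{0..x}|lborel. u' t)"
    and "u' x = u' 0 + (LINT t:{0..x}|lborel. (V t - z) * u t)"
  using assms unfolding solves_def by blast+

lemma solves_linear_combination:
  assumes f: "solves V z f f'" and g: "solves V z g g'"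
  shows "solves V z (\<lambda>x. a * f x + b * g x) (\<lambda>x. a * f' x + b * g' x)"
  unfolding solves_def
proof (intro allI impI conjI)
  fix x :: real assume x: "0 \<le> x"
  note F = solvesD[OF f x] and G = solvesD[OF g x]
  show "set_integrable lborel {0..x} (\<lambda>x. a * f' x + b * g' x)"
    using F(1) G(1) by (intro set_integral_add) auto
  have distr: "(\<lambda>t. (V t - z) * (a * f t + b * g t))
      = (\<lambda>t. a * ((V t - z) * f t) + b * ((V t - z) * g t))"
    by (simp add: fun_eq_iff algebra_simps)
  show "set_integrable lborel {0..x} (\<lambda>t. (V t - z) * (a * f t + b * g t))"
    unfolding distr using F(2) G(2) by (intro set_integral_add) auto
  show "a * f' x + b * g' x
      = a * f' 0 + b * g' 0 + (LINT t:{0..x}|lborel. (V t - z) * (a * f t + b * g t))"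
  proof -
    have "(LINT t:{0..x}|lborel. a * ((V t - z) * f t) + b * ((V t - z) * g t))
        = a * (LINT t:{0..x}|lborel. (V t - z) * f t) + b * (LINT t:{0..x}|lborel. (V t - z) * g t)"
      by (subst set_integral_add(2)) (use F(2) G(2) in auto)
    then show ?thesis unfolding distr using F(4) G(4) by algebra
  qed
  show "a * f x + b * g x = a * f 0 + b * g 0 + (LINT t:{0..x}|lborel. a * f' t + b * g' t)"
    using F(1,3) G(1,3) by (simp add: set_integral_add algebra_simps)
qed

lemma solves_mult:
  "solves V z u u' \<Longrightarrow> solves V z (\<lambda>x. c * u x) (\<lambda>x. c * u' x)"
  using solves_linear_combination[of V z u u' u u' c 0] by simp

lemma continuous_on_if_indefinite_integral:
  fixes u u' :: "real \<Rightarrow> complex"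
  assumes I: "\<And>x. 0 \<le> x \<Longrightarrow> set_integrable lborel {0..x} u'"
    and u: "\<And>x. 0 \<le> x \<Longrightarrow> u x = u 0 + (LINT t:{0..x}|lborel. u' t)"
  shows "continuous_on {0..} u"
  unfolding continuous_on_def
proof
  fix x :: real assume x: "x \<in> {0..}"
  have "u' integrable_on {0..x+1}"
    using set_borel_integral_eq_integral(1)[OF I] x by simp
  then have "continuous_on {0..x+1} (\<lambda>y. u 0 + integral {0..y} u')"
    by (intro continuous_intros indefinite_integral_continuous_1)
  moreover have "u y = u 0 + integral {0..y} u'" if "y \<in> {0..x+1}" for y
    using u[of y] set_borel_integral_eq_integral(2)[OF I[of y]] that by auto
  ultimately have "continuous_on {0..x+1} u"
    using continuous_on_cong by (metis (no_types, lifting))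
  then have "(u \<longlongrightarrow> u x) (at x within {0..x+1})"
    using x unfolding continuous_on_def by auto
  moreover have "at x within {0..x+1} = at x within {0..}"
    by (rule at_within_nhd[where S="{..<x+1}"]) auto
  ultimately show "(u \<longlongrightarrow> u x) (at x within {0..})" by simp
qed

lemma solves_continuous_on: "solves V z u u' \<Longrightarrow> continuous_on {0..} u"
  by (rule continuous_on_if_indefinite_integral[of u']) (auto dest: solvesD)

lemma set_integral_piecewise:
  fixes H A B :: "real \<Rightarrow> complex"
  assumes A: "set_integrable lborel {0..x} A" and B: "set_integrable lborel {0..x} B"
    and H: "\<And>t. t \<in> {0..x} \<Longrightarrow> H t = (if t \<le> R then A t else B t)"
    and R: "0 \<le> R" "R \<le> x"
  shows "set_integrable lborel {0..x} H"
    and "(LINT t:{0..x}|lborel. H t)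
       = (LINT t:{0..R}|lborel. A t) + ((LINT t:{0..x}|lborel. B t) - (LINT t:{0..R}|lborel. B t))"
proof -
  have un: "{0..x} = {0..R} \<union> {R<..x}" using R by auto
  have dis: "{0..R} \<inter> {R<..x} = {}" by auto
  have A1: "set_integrable lborel {0..R} A" by (rule set_integrable_subset[OF A]) (use R in auto)
  have B1: "set_integrable lborel {0..R} B" by (rule set_integrable_subset[OF B]) (use R in auto)
  have B2: "set_integrable lborel {R<..x} B" by (rule set_integrable_subset[OF B]) (use R in auto)
  have H1: "set_integrable lborel {0..R} H"
    by (rule set_integrable_cong[THEN iffD2, OF refl refl _ A1]) (use H R in auto)
  have H2: "set_integrable lborel {R<..x} H"
    by (rule set_integrable_cong[THEN iffD2, OF refl refl _ B2]) (use H R in auto)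
  show "set_integrable lborel {0..x} H"
    unfolding un by (rule set_integrable_Un[OF H1 H2]) auto
  have "(LINT t:{0..x}|lborel. H t) = (LINT t:{0..R}|lborel. H t) + (LINT t:{R<..x}|lborel. H t)"
    unfolding un by (rule set_integral_Un[OF dis H1 H2])
  also have "(LINT t:{0..R}|lborel. H t) = (LINT t:{0..R}|lborel. A t)"
    by (rule set_lebesgue_integral_cong) (use H R in auto)
  also have "(LINT t:{R<..x}|lborel. H t) = (LINT t:{R<..x}|lborel. B t)"
    by (rule set_lebesgue_integral_cong) (use H R in auto)
  also have "(LINT t:{R<..x}|lborel. B t) = (LINT t:{0..x}|lborel. B t) - (LINT t:{0..R}|lborel. B t)"
    unfolding un by (subst set_integral_Un[OF dis B1 B2]) simp
  finally show "(LINT t:{0..x}|lborel. H t)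
       = (LINT t:{0..R}|lborel. A t) + ((LINT t:{0..x}|lborel. B t) - (LINT t:{0..R}|lborel. B t))" .
qed

lemma solves_glue:
  assumes sf: "solves V1 z1 f f'" and sg: "solves V2 z2 g g'" and R: "0 \<le> R"
    and match: "f R = g R" "f' R = g' R"
    and V1: "\<And>t. t \<in> {0..R} \<Longrightarrow> V t - z = V1 t - z1"
    and V2: "\<And>t. R < t \<Longrightarrow> V t - z = V2 t - z2"
  shows "solves V z (\<lambda>x. if x \<le> R then f x else g x) (\<lambda>x. if x \<le> R then f' x else g' x)"
  unfolding solves_def
proof (intro allI impI)
  fix x :: real assume x: "0 \<le> x"
  let ?h = "\<lambda>x. if x \<le> R then f x else g x"
  let ?h' = "\<lambda>x. if x \<le> R then f' x else g' x"
  show "set_integrable lborel {0..x} ?h' \<and> set_integrable lborel {0..x} (\<lambda>t. (V t - z) * ?h t)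
     \<and> ?h x = ?h 0 + (LINT t:{0..x}|lborel. ?h' t)
     \<and> ?h' x = ?h' 0 + (LINT t:{0..x}|lborel. (V t - z) * ?h t)"
  proof (cases "x \<le> R")
    case True
    have "set_integrable lborel {0..x} ?h' = set_integrable lborel {0..x} f'"
      by (rule set_integrable_cong) (use True in auto)
    moreover have "set_integrable lborel {0..x} (\<lambda>t. (V t - z) * ?h t)
        = set_integrable lborel {0..x} (\<lambda>t. (V1 t - z1) * f t)"
      by (rule set_integrable_cong) (use True V1 in auto)
    moreover have "(LINT t:{0..x}|lborel. ?h' t) = (LINT t:{0..x}|lborel. f' t)"
      by (rule set_lebesgue_integral_cong) (use True in auto)
    moreover have "(LINT t:{0..x}|lborel. (V t - z) * ?h t) = (LINT t:{0..x}|lborel. (V1 t - z1) * f t)"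
      by (rule set_lebesgue_integral_cong) (use True V1 in auto)
    ultimately show ?thesis using solvesD[OF sf x] True R by simp
  next
    case False
    then have xR: "R \<le> x" by simp
    have piece: "\<And>t. t \<in> {0..x} \<Longrightarrow> ?h' t = (if t \<le> R then f' t else g' t)"
      "\<And>t. t \<in> {0..x} \<Longrightarrow>
         (V t - z) * ?h t = (if t \<le> R then (V1 t - z1) * f t else (V2 t - z2) * g t)"
      using V1 V2 by auto
    note S1 = set_integral_piecewise[OF solvesD(1)[OF sf x] solvesD(1)[OF sg x] piece(1) R xR]
    note S2 = set_integral_piecewise[OF solvesD(2)[OF sf x] solvesD(2)[OF sg x] piece(2) R xR]
    have ends: "?h x = g x" "?h 0 = f 0" "?h' x = g' x" "?h' 0 = f' 0"
      using False R by auto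
    have "?h x = ?h 0 + (LINT t:{0..x}|lborel. ?h' t)"
      unfolding ends(1,2)
      using S1(2) solvesD(3)[OF sf R] solvesD(3)[OF sg x] solvesD(3)[OF sg R] match(1)
      by algebra
    moreover have "?h' x = ?h' 0 + (LINT t:{0..x}|lborel. (V t - z) * ?h t)"
      unfolding ends(3,4)
      using S2(2) solvesD(4)[OF sf R] solvesD(4)[OF sg x] solvesD(4)[OF sg R] match(2)
      by algebra
    ultimately show ?thesis using S1(1) S2(1) by blast
  qed
qed

definition wronskian ::
    "(real \<Rightarrow> complex) \<Rightarrow> (real \<Rightarrow> complex) \<Rightarrow> (real \<Rightarrow> complex) \<Rightarrow> (real \<Rightarrow> complex) \<Rightarrow> real \<Rightarrow> complex"
  where "wronskian u u' v v' x = u x * v' x - u' x * v x"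

lemma wronskian_expansion:
  "wronskian p p' m m' x * u x = wronskian u u' m m' x * p x - wronskian u u' p p' x * m x"
  "wronskian p p' m m' x * u' x = wronskian u u' m m' x * p' x - wronskian u u' p p' x * m' x"
  by (simp_all add: wronskian_def algebra_simps)

lemma wronskian_integral_identity:
  assumes su: "solves V1 z1 u u'" and sv: "solves V2 z2 v v'" and x: "0 \<le> x"
  defines "h \<equiv> \<lambda>t. u t * ((V2 t - z2) * v t) - ((V1 t - z1) * u t) * v t"
  shows "set_integrable lborel {0..x} h"
    and "wronskian u u' v v' x = wronskian u u' v v' 0 + (LINT t:{0..x}|lborel. h t)"
proof -
  have u: "\<And>t. t \<in> {0..x} \<Longrightarrow> u t = u 0 + (LINT s:{0..t}|lborel. u' s)"
    by (rule solvesD(3)[OF su]) auto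
  have du: "\<And>t. t \<in> {0..x} \<Longrightarrow> u' t = u' 0 + (LINT s:{0..t}|lborel. (V1 s - z1) * u s)"
    by (rule solvesD(4)[OF su]) auto
  have v: "\<And>t. t \<in> {0..x} \<Longrightarrow> v t = v 0 + (LINT s:{0..t}|lborel. v' s)"
    by (rule solvesD(3)[OF sv]) auto
  have dv: "\<And>t. t \<in> {0..x} \<Longrightarrow> v' t = v' 0 + (LINT s:{0..t}|lborel. (V2 s - z2) * v s)"
    by (rule solvesD(4)[OF sv]) auto
  have A: "set_integrable lborel {0..x} (\<lambda>t. u t * ((V2 t - z2) * v t) + u' t * v' t)"
    "(LINT t:{0..x}|lborel. u t * ((V2 t - z2) * v t) + u' t * v' t) = u x * v' x - u 0 * v' 0"
    using set_integral_product_rule[OF solvesD(1)[OF su x] solvesD(2)[OF sv x] u dv x] by blast+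
  have B: "set_integrable lborel {0..x} (\<lambda>t. u' t * v' t + ((V1 t - z1) * u t) * v t)"
    "(LINT t:{0..x}|lborel. u' t * v' t + ((V1 t - z1) * u t) * v t) = u' x * v x - u' 0 * v 0"
    using set_integral_product_rule[OF solvesD(2)[OF su x] solvesD(1)[OF sv x] du v x] by blast+
  have diff: "h = (\<lambda>t. (u t * ((V2 t - z2) * v t) + u' t * v' t)
                    - (u' t * v' t + ((V1 t - z1) * u t) * v t))"
    by (simp add: h_def fun_eq_iff algebra_simps)
  show "set_integrable lborel {0..x} h"
    unfolding diff using A(1) B(1) by (rule set_integral_diff)
  have "(LINT t:{0..x}|lborel. h t) = (u x * v' x - u 0 * v' 0) - (u' x * v x - u' 0 * v 0)"
    unfolding diff A(2)[symmetric] B(2)[symmetric] using A(1) B(1) by (rule set_integral_diff)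
  then show "wronskian u u' v v' x = wronskian u u' v v' 0 + (LINT t:{0..x}|lborel. h t)"
    unfolding wronskian_def by algebra
qed

lemma wronskian_eq_if_potentials_agree:
  assumes su: "solves V1 z1 u u'" and sv: "solves V2 z2 v v'" and ab: "0 \<le> a" "a \<le> b"
    and agree: "\<And>t. t \<in> {a<..b} \<Longrightarrow> V1 t - z1 = V2 t - z2"
  shows "wronskian u u' v v' b = wronskian u u' v v' a"
proof -
  define h where "h t = u t * ((V2 t - z2) * v t) - ((V1 t - z1) * u t) * v t" for t
  have W: "wronskian u u' v v' y = wronskian u u' v v' 0 + (LINT t:{0..y}|lborel. h t)"
    if "0 \<le> y" for y
    unfolding h_def by (rule wronskian_integral_identity(2)[OF su sv that])
  have hb: "set_integrable lborel {0..b} h"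
    unfolding h_def using ab by (intro wronskian_integral_identity(1)[OF su sv]) simp
  have ha: "set_integrable lborel {0..a} h" and hab: "set_integrable lborel {a<..b} h"
    by (rule set_integrable_subset[OF hb], use ab in auto)+
  have "h t = 0" if "t \<in> {a<..b}" for t
    unfolding h_def agree[OF that] by (simp add: algebra_simps)
  then have "(LINT t:{a<..b}|lborel. h t) = (LINT t:{a<..b}|lborel. 0)"
    by (intro set_lebesgue_integral_cong) auto
  moreover have "(LINT t:{0..b}|lborel. h t) = (LINT t:{0..a}|lborel. h t) + (LINT t:{a<..b}|lborel. h t)"
  proof -
    have "{0..b} = {0..a} \<union> {a<..b}" using ab by auto
    moreover have "{0..a} \<inter> {a<..b} = {}" by auto
    ultimately show ?thesis using set_integral_Un[OF _ ha hab] by simp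
  qed
  ultimately show ?thesis
    using W[of a] W[of b] ab by simp
qed

lemma not_set_integrable_if_eventually_ge_one:
  fixes f :: "real \<Rightarrow> real"
  assumes int: "set_integrable lborel {0..} f" and ev: "\<forall>\<^sub>F x in at_top. 1 \<le> f x"
  shows False
proof -
  obtain X where X: "0 \<le> X" "\<And>x. X \<le> x \<Longrightarrow> 1 \<le> f x"
    using eventually_conj[OF ev eventually_ge_at_top[of 0]]
    by (auto simp: eventually_at_top_linorder)
  have "(\<integral>\<^sup>+ x. ennreal (norm (indicator {0..} x *\<^sub>R f x)) \<partial>lborel) < \<infinity>"
    using int unfolding set_integrable_def integrable_iff_bounded by blast
  then obtain B where B: "(\<integral>\<^sup>+ x. ennreal (norm (indicator {0..} x *\<^sub>R f x)) \<partial>lborel) = ennreal B"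
    and "0 \<le> B"
    by (metis ennreal_cases infinity_ennreal_def less_irrefl)
  obtain n :: nat where n: "B < real n" using reals_Archimedean2 by blast
  have "ennreal (real n) = (\<integral>\<^sup>+ x. indicator {X..X + real n} x \<partial>lborel)"
    by simp
  also have "\<dots> \<le> (\<integral>\<^sup>+ x. ennreal (norm (indicator {0..} x *\<^sub>R f x)) \<partial>lborel)"
  proof (rule nn_integral_mono)
    fix x
    show "indicator {X..X + real n} x \<le> ennreal (norm (indicator {0..} x *\<^sub>R f x))"
    proof (cases "x \<in> {X..X + real n}")
      case True
      then have "1 \<le> f x" using X(2) by auto
      then show ?thesis using True X(1) by (simp add: indicator_def)
    qed simp
  qed
  finally show False using B \<open>0 \<le> B\<close> n by (simp add: ennreal_le_iff2)
qed

lemma set_integrable_exp_neg: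
  fixes a :: real
  assumes "0 < a"
  shows "set_integrable lborel {R..} (\<lambda>x. exp (- a * x))"
proof -
  have "(\<lambda>x. exp (- a * x)) absolutely_integrable_on {R..}"
    using integrable_on_exp_minus_to_infinity[OF assms]
    by (rule nonnegative_absolutely_integrable_1) auto
  moreover have "(\<lambda>x. indicator {R..} x *\<^sub>R exp (- a * x)) \<in> borel_measurable lborel"
    by measurable
  ultimately show ?thesis
    unfolding set_integrable_def using integrable_completion by blast
qed

lemma set_integrable_square_if_exp_decay:
  fixes f :: "real \<Rightarrow> complex"
  assumes cont: "continuous_on {R..} f" and bound: "\<And>x. R \<le> x \<Longrightarrow> cmod (f x) \<le> M * exp (- c * x)"
    and c: "0 < c"
  shows "set_integrable lborel {R..} (\<lambda>x. (cmod (f x))\<^sup>2)"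
proof (rule set_integrable_bound)
  show "set_integrable lborel {R..} (\<lambda>x. M\<^sup>2 * exp (- (2 * c) * x))"
    using set_integrable_exp_neg[of "2 * c" R] c by auto
  have "continuous_on {R..} (\<lambda>x. (cmod (f x))\<^sup>2)" by (intro continuous_intros cont)
  then have "(\<lambda>x. indicator {R..} x *\<^sub>R (cmod (f x))\<^sup>2) \<in> borel_measurable borel"
    by (rule borel_measurable_continuous_on_indicator[rotated]) auto
  then show "set_borel_measurable lborel {R..} (\<lambda>x. (cmod (f x))\<^sup>2)"
    unfolding set_borel_measurable_def by simp
  show "AE x in lborel. x \<in> {R..} \<longrightarrow> norm ((cmod (f x))\<^sup>2) \<le> norm (M\<^sup>2 * exp (- (2 * c) * x))"
  proof (rule AE_I2, intro impI)
    fix x assume "x \<in> {R..}"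
    then have "(cmod (f x))\<^sup>2 \<le> (M * exp (- c * x))\<^sup>2"
      using bound by (intro power_mono) auto
    also have "\<dots> = M\<^sup>2 * exp (- (2 * c) * x)"
      by (simp add: power_mult_distrib power2_eq_square exp_add[symmetric])
    finally show "norm ((cmod (f x))\<^sup>2) \<le> norm (M\<^sup>2 * exp (- (2 * c) * x))" by simp
  qed
qed

lemma nonneg_axis_iff: "z \<in> nonneg_axis \<longleftrightarrow> Im z = 0 \<and> 0 \<le> Re z"
  unfolding nonneg_axis_def by (auto simp: complex_eq_iff image_iff intro: bexI[of _ "Re z"])

lemma closed_nonneg_axis: "closed nonneg_axis"
proof -
  have "nonneg_axis = {z. 0 \<le> Re z} \<inter> {z. Im z = 0}"
    by (auto simp: nonneg_axis_iff)
  then show ?thesis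
    by (metis closed_Int closed_halfspace_Re_ge closed_halfspace_Im_eq atLeast_def)
qed

lemma csqrt_up_off_axis: "z \<notin> nonneg_axis \<Longrightarrow> csqrt_up z = \<i> * csqrt (- z)"
  unfolding csqrt_up_def by (auto simp: nonneg_axis_iff)

lemma norm_csqrt_up: "cmod (csqrt_up z) = sqrt (cmod z)"
  by (auto simp: csqrt_up_def norm_mult cmod_eq_Re)

lemma csqrt_up_eq_0_iff [simp]: "csqrt_up z = 0 \<longleftrightarrow> z = 0"
  using norm_csqrt_up[of z] by (metis norm_eq_zero real_sqrt_eq_zero_cancel_iff)

lemma Im_csqrt_up_pos:
  assumes z: "z \<notin> nonneg_axis"
  shows "0 < Im (csqrt_up z)"
proof -
  have "Re (csqrt (- z)) \<noteq> 0"
  proof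
    assume "Re (csqrt (- z)) = 0"
    then have "\<exists>y. csqrt (- z) = \<i> * complex_of_real y"
      by (intro exI[of _ "Im (csqrt (- z))"]) (simp add: complex_eq_iff)
    then obtain y where "csqrt (- z) = \<i> * complex_of_real y" ..
    then have "- z = (\<i> * complex_of_real y)\<^sup>2"
      by (metis power2_csqrt)
    then have "z = complex_of_real (y\<^sup>2)"
      by (simp add: power_mult_distrib minus_equation_iff[of z])
    then show False using z by (simp add: nonneg_axis_iff)
  qed
  then show ?thesis
    using Re_csqrt[of "- z"] z by (simp add: csqrt_up_off_axis)
qed

lemma holomorphic_csqrt_up: "csqrt_up holomorphic_on (- nonneg_axis)"
proof -
  have "(\<lambda>z. \<i> * csqrt (- z)) holomorphic_on (- nonneg_axis)"
    by (intro holomorphic_intros) (auto simp: nonneg_axis_iff complex_nonpos_Reals_iff)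
  then show ?thesis
    by (rule holomorphic_transform) (simp add: csqrt_up_off_axis)
qed

lemma norm_psi_p: "cmod (psi_p Ep x z) = exp (- Im (csqrt_up z) * x) * cmod (1 + Ep x z)"
  by (simp add: psi_p_def norm_mult norm_exp_eq_Re)

lemma norm_psi_m: "cmod (psi_m Em x z) = exp (Im (csqrt_up z) * x) * cmod (1 + Em x z)"
  by (simp add: psi_m_def norm_mult norm_exp_eq_Re)

lemma tendsto_0_if_norm_add_tendsto_0:
  fixes E F :: "'a \<Rightarrow> 'b::real_normed_vector"
  assumes "((\<lambda>x. norm (E x) + norm (F x)) \<longlongrightarrow> 0) G"
  shows "(E \<longlongrightarrow> 0) G" and "(F \<longlongrightarrow> 0) G"
  by (rule Lim_null_comparison[OF _ assms]; simp)+

locale jost_solutions =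
  fixes q :: "real \<Rightarrow> complex" and Ep Em Edp Edm :: "real \<Rightarrow> complex \<Rightarrow> complex"
  assumes solves_psi_p: "\<And>z. z \<noteq> 0 \<Longrightarrow> solves q z (\<lambda>x. psi_p Ep x z) (\<lambda>x. dpsi_p Edp x z)"
    and solves_psi_m: "\<And>z. z \<noteq> 0 \<Longrightarrow> solves q z (\<lambda>x. psi_m Em x z) (\<lambda>x. dpsi_m Edm x z)"
    and errors_p_tendsto: "\<And>z. z \<noteq> 0 \<Longrightarrow> ((\<lambda>x. cmod (Ep x z) + cmod (Edp x z)) \<longlongrightarrow> 0) at_top"
    and errors_m_tendsto: "\<And>z. z \<noteq> 0 \<Longrightarrow> ((\<lambda>x. cmod (Em x z) + cmod (Edm x z)) \<longlongrightarrow> 0) at_top"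
begin

lemma wronskian_psi_p_psi_m:
  assumes z: "z \<noteq> 0" and x: "0 \<le> x"
  shows "wronskian (\<lambda>x. psi_p Ep x z) (\<lambda>x. dpsi_p Edp x z) (\<lambda>x. psi_m Em x z) (\<lambda>x. dpsi_m Edm x z) x
       = - 2 * \<i> * csqrt_up z"
proof -
  define W where
    "W = wronskian (\<lambda>x. psi_p Ep x z) (\<lambda>x. dpsi_p Edp x z) (\<lambda>x. psi_m Em x z) (\<lambda>x. dpsi_m Edm x z)"
  have const: "W y = W 0" if "0 \<le> y" for y
    unfolding W_def
    by (rule wronskian_eq_if_potentials_agree[OF solves_psi_p[OF z] solves_psi_m[OF z]])
      (use that in auto)
  have W_eq: "W y = - \<i> * csqrt_up z * ((1 + Ep y z) * (1 + Edm y z) + (1 + Edp y z) * (1 + Em y z))"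
    for y
  proof -
    have "exp (\<i> * csqrt_up z * y) * exp (- \<i> * csqrt_up z * y) = 1"
      by (simp add: exp_add[symmetric])
    then show ?thesis
      unfolding W_def wronskian_def psi_p_def psi_m_def dpsi_p_def dpsi_m_def
      by algebra
  qed
  have "(W \<longlongrightarrow> - \<i> * csqrt_up z * ((1 + 0) * (1 + 0) + (1 + 0) * (1 + 0))) at_top"
    unfolding W_eq[abs_def]
    using tendsto_0_if_norm_add_tendsto_0[OF errors_p_tendsto[OF z]]
      tendsto_0_if_norm_add_tendsto_0[OF errors_m_tendsto[OF z]]
    by (intro tendsto_intros)
  then have "(W \<longlongrightarrow> - 2 * \<i> * csqrt_up z) at_top"
    by (simp add: mult.commute mult.left_commute)
  moreover have "\<forall>\<^sub>F y in at_top. W y = W 0"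
    using eventually_ge_at_top[of 0] by eventually_elim (rule const)
  ultimately have "((\<lambda>_::real. W 0) \<longlongrightarrow> - 2 * \<i> * csqrt_up z) at_top"
    by (simp add: tendsto_cong)
  then show ?thesis
    using const[OF x] unfolding W_def[symmetric] by (simp add: tendsto_const_iff)
qed

lemma eventually_errors_small:
  assumes "z \<noteq> 0"
  shows "\<forall>\<^sub>F x in at_top. cmod (Ep x z) \<le> 1/2 \<and> cmod (Em x z) \<le> 1/2"
proof -
  have "\<forall>\<^sub>F x in at_top. cmod (Ep x z) + cmod (Edp x z) < 1/2"
    by (rule order_tendstoD(2)[OF errors_p_tendsto[OF assms]]) simp
  moreover have "\<forall>\<^sub>F x in at_top. cmod (Em x z) + cmod (Edm x z) < 1/2"
    by (rule order_tendstoD(2)[OF errors_m_tendsto[OF assms]]) simp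
  ultimately show ?thesis
  proof eventually_elim
    case (elim x)
    then show ?case
      using norm_ge_zero[of "Edp x z"] norm_ge_zero[of "Edm x z"] by linarith
  qed
qed

lemma psi_p_square_integrable_at_top:
  assumes z: "z \<notin> nonneg_axis"
  shows "\<forall>\<^sub>F X in at_top.
           psi_p Ep X z \<noteq> 0 \<and> set_integrable lborel {X..} (\<lambda>x. (cmod (psi_p Ep x z))\<^sup>2)"
proof -
  have z0: "z \<noteq> 0" using z by (auto simp: nonneg_axis_iff)
  define c where "c = Im (csqrt_up z)"
  have c: "0 < c" unfolding c_def by (rule Im_csqrt_up_pos[OF z])
  obtain X0 where X0: "\<And>x. X0 \<le> x \<Longrightarrow> cmod (Ep x z) \<le> 1/2"
    using eventually_errors_small[OF z0] by (auto simp: eventually_at_top_linorder)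
  have bounds: "exp (- c * x) / 2 \<le> cmod (psi_p Ep x z) \<and> cmod (psi_p Ep x z) \<le> 3/2 * exp (- c * x)"
    if "X0 \<le> x" for x
    using X0[OF that] norm_triangle_ineq[of 1 "Ep x z"] norm_triangle_ineq2[of 1 "- Ep x z"]
    unfolding norm_psi_p c_def[symmetric] by (auto intro: mult_left_mono)
  have cont: "continuous_on {0..} (\<lambda>x. psi_p Ep x z)"
    by (rule solves_continuous_on[OF solves_psi_p[OF z0]])
  show ?thesis
    unfolding eventually_at_top_linorder
  proof (intro exI[of _ "max X0 0"] allI impI conjI)
    fix X assume X: "max X0 0 \<le> X"
    show "psi_p Ep X z \<noteq> 0"
      using bounds[of X] X exp_gt_zero[of "- c * X"] by force
    show "set_integrable lborel {X..} (\<lambda>x. (cmod (psi_p Ep x z))\<^sup>2)"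
      by (rule set_integrable_square_if_exp_decay[where M = "3/2",
            OF continuous_on_subset[OF cont] _ c])
        (use X bounds in auto)
  qed
qed

lemma psi_combination_not_square_integrable:
  assumes L2: "set_integrable lborel {0..} (\<lambda>x. (cmod (u x))\<^sup>2)"
    and comb: "\<And>x. R \<le> x \<Longrightarrow> w * u x = b * psi_p Ep x z - a * psi_m Em x z"
    and w: "w \<noteq> 0" and z: "z \<notin> nonneg_axis"
  shows "a = 0"
proof (rule ccontr)
  assume a: "a \<noteq> 0"
  have z0: "z \<noteq> 0" using z by (auto simp: nonneg_axis_iff)
  define c where "c = Im (csqrt_up z)"
  have c: "0 < c" unfolding c_def by (rule Im_csqrt_up_pos[OF z])
  define T where "T = 2 * (cmod w + 3/2 * cmod b) / cmod a"
    \<comment> \<open>so that \<open>cmod a * T / 2 - cmod b * 3/2 = cmod w\<close>, the bound that forces \<open>1 \<le> cmod (u x)\<close>\<close>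
  have "\<forall>\<^sub>F x in at_top. 1 \<le> (cmod (u x))\<^sup>2"
    using eventually_errors_small[OF z0] eventually_ge_at_top[of R]
      eventually_ge_at_top[of "max 0 (T / c)"]
  proof eventually_elim
    case (elim x)
    then have x: "0 \<le> x" "T \<le> c * x"
      using c by (auto simp: pos_divide_le_eq mult.commute)
    have "exp (c * x) / 2 \<le> cmod (psi_m Em x z)"
      using elim norm_triangle_ineq2[of 1 "- Em x z"]
      unfolding norm_psi_m c_def[symmetric] by (auto intro: mult_left_mono)
    moreover have "cmod (psi_p Ep x z) \<le> 3/2"
    proof -
      have "exp (- c * x) \<le> 1" using c x by simp
      moreover have "cmod (1 + Ep x z) \<le> 3/2"
        using elim norm_triangle_ineq[of 1 "Ep x z"] by simp
      ultimately show ?thesis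
        unfolding norm_psi_p c_def[symmetric]
        using mult_mono[of "exp (- c * x)" 1 "cmod (1 + Ep x z)" "3/2"] by simp
    qed
    moreover have "T \<le> exp (c * x)"
      using x(2) exp_ge_add_one_self[of "c * x"] by linarith
    ultimately have "cmod a * (T / 2) \<le> cmod a * cmod (psi_m Em x z)"
      and "cmod b * cmod (psi_p Ep x z) \<le> cmod b * (3/2)"
      by (intro mult_left_mono; simp)+
    then have "cmod a * T / 2 - cmod b * 3/2 \<le> cmod (a * psi_m Em x z) - cmod (b * psi_p Ep x z)"
      unfolding norm_mult by linarith
    also have "\<dots> \<le> cmod (w * u x)"
      using comb[of x] elim norm_triangle_ineq2[of "a * psi_m Em x z" "b * psi_p Ep x z"]
      by (simp add: norm_minus_commute)
    finally have "cmod w \<le> cmod w * cmod (u x)"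
      using a by (simp add: T_def norm_mult field_simps)
    then show ?case
      using w by (simp add: one_le_power)
  qed
  then show False
    by (rule not_set_integrable_if_eventually_ge_one[OF L2])
qed

definition reg_sol :: "complex \<Rightarrow> real \<Rightarrow> complex" where
  "reg_sol z x = psi_m Em 0 z * psi_p Ep x z - psi_p Ep 0 z * psi_m Em x z"

definition reg_sol' :: "complex \<Rightarrow> real \<Rightarrow> complex" where
  "reg_sol' z x = psi_m Em 0 z * dpsi_p Edp x z - psi_p Ep 0 z * dpsi_m Edm x z"

lemma solves_reg_sol: "z \<noteq> 0 \<Longrightarrow> solves q z (reg_sol z) (reg_sol' z)"
  using solves_linear_combination[OF solves_psi_p solves_psi_m, of z "psi_m Em 0 z" "- psi_p Ep 0 z"]
  unfolding reg_sol_def[abs_def] reg_sol'_def[abs_def] by simp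

lemma reg_sol_at_0: "reg_sol z 0 = 0"
  by (simp add: reg_sol_def)

lemma reg_sol_nontrivial:
  assumes z: "z \<noteq> 0" and x: "0 \<le> x" and "reg_sol z x = 0" and "reg_sol' z x = 0"
  shows False
proof -
  let ?W = "wronskian (\<lambda>x. psi_p Ep x z) (\<lambda>x. dpsi_p Edp x z) (\<lambda>x. psi_m Em x z) (\<lambda>x. dpsi_m Edm x z)"
  have W: "?W y \<noteq> 0" if "0 \<le> y" for y
    using wronskian_psi_p_psi_m[OF z that] z by simp
  have "psi_p Ep 0 z * ?W x = reg_sol z x * dpsi_p Edp x z - reg_sol' z x * psi_p Ep x z"
    and "psi_m Em 0 z * ?W x = reg_sol z x * dpsi_m Edm x z - reg_sol' z x * psi_m Em x z"
    by (simp_all add: reg_sol_def reg_sol'_def wronskian_def algebra_simps)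
  then have "psi_p Ep 0 z = 0" and "psi_m Em 0 z = 0"
    using W[OF x] assms(3,4) by simp_all
  then have "?W 0 = 0"
    by (simp add: wronskian_def)
  then show False
    using W[of 0] by simp
qed

lemma dirichlet_solution_eq_reg_sol_multiple:
  assumes su: "solves V lam u u'" and u0: "u 0 = 0" and z: "z \<noteq> 0"
    and inner: "\<And>t. t \<in> {0..R} \<Longrightarrow> V t - lam = q t - z"
  obtains c where "\<And>x. x \<in> {0..R} \<Longrightarrow> u x = c * reg_sol z x \<and> u' x = c * reg_sol' z x"
proof
  fix x assume x: "x \<in> {0..R}"
  let ?P = "\<lambda>x. psi_p Ep x z" and ?P' = "\<lambda>x. dpsi_p Edp x z"
  let ?M = "\<lambda>x. psi_m Em x z" and ?M' = "\<lambda>x. dpsi_m Edm x z"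
  have WP: "wronskian u u' ?P ?P' x = - u' 0 * ?P 0"
    using wronskian_eq_if_potentials_agree[OF su solves_psi_p[OF z], of 0 x] x inner u0
    by (simp add: wronskian_def)
  have WM: "wronskian u u' ?M ?M' x = - u' 0 * ?M 0"
    using wronskian_eq_if_potentials_agree[OF su solves_psi_m[OF z], of 0 x] x inner u0
    by (simp add: wronskian_def)
  have W: "wronskian ?P ?P' ?M ?M' x = - 2 * \<i> * csqrt_up z"
    using wronskian_psi_p_psi_m[OF z] x by simp
  have "- 2 * \<i> * csqrt_up z * u x = - u' 0 * reg_sol z x"
    and "- 2 * \<i> * csqrt_up z * u' x = - u' 0 * reg_sol' z x"
    using wronskian_expansion[where p = ?P and p' = ?P' and m = ?M and m' = ?M'
        and u = u and u' = u' and x = x]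
    unfolding W WP WM reg_sol_def reg_sol'_def by (simp_all add: algebra_simps)
  then show "u x = u' 0 / (2 * \<i> * csqrt_up z) * reg_sol z x
      \<and> u' x = u' 0 / (2 * \<i> * csqrt_up z) * reg_sol' z x"
    using z by (simp add: field_simps)
qed

lemma expansion_in_psi_beyond:
  assumes su: "solves V lam u u'" and lam: "lam \<noteq> 0" and R: "0 \<le> R" and x: "R \<le> x"
    and outer: "\<And>t. R < t \<Longrightarrow> V t = q t"
  shows "- 2 * \<i> * csqrt_up lam * u x
       = wronskian u u' (\<lambda>x. psi_m Em x lam) (\<lambda>x. dpsi_m Edm x lam) R * psi_p Ep x lam
       - wronskian u u' (\<lambda>x. psi_p Ep x lam) (\<lambda>x. dpsi_p Edp x lam) R * psi_m Em x lam"
proof -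
  have "wronskian u u' (\<lambda>x. psi_m Em x lam) (\<lambda>x. dpsi_m Edm x lam) x
      = wronskian u u' (\<lambda>x. psi_m Em x lam) (\<lambda>x. dpsi_m Edm x lam) R"
    "wronskian u u' (\<lambda>x. psi_p Ep x lam) (\<lambda>x. dpsi_p Edp x lam) x
      = wronskian u u' (\<lambda>x. psi_p Ep x lam) (\<lambda>x. dpsi_p Edp x lam) R"
    using wronskian_eq_if_potentials_agree[OF su solves_psi_m[OF lam], of R x]
      wronskian_eq_if_potentials_agree[OF su solves_psi_p[OF lam], of R x] R x outer
    by auto
  then show ?thesis
    using wronskian_expansion(1)[where p = "\<lambda>x. psi_p Ep x lam" and p' = "\<lambda>x. dpsi_p Edp x lam"
        and m = "\<lambda>x. psi_m Em x lam" and m' = "\<lambda>x. dpsi_m Edm x lam"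
        and u = u and u' = u' and x = x]
      wronskian_psi_p_psi_m[OF lam] R x
    by simp
qed

abbreviation matching_wronskian :: "complex \<Rightarrow> complex \<Rightarrow> real \<Rightarrow> complex" where
  "matching_wronskian \<mu> lam R
     \<equiv> wronskian (reg_sol \<mu>) (reg_sol' \<mu>) (\<lambda>x. psi_p Ep x lam) (\<lambda>x. dpsi_p Edp x lam) R"

lemma matching_wronskian_zero_if_eigenfunction:
  assumes su: "solves V lam u u'" and u0: "u 0 = 0"
    and L2: "set_integrable lborel {0..} (\<lambda>x. (cmod (u x))\<^sup>2)" and nz: "\<exists>x\<ge>0. u x \<noteq> 0"
    and R: "0 \<le> R" and mu: "\<mu> \<noteq> 0" and lam: "lam \<notin> nonneg_axis"
    and inner: "\<And>t. t \<in> {0..R} \<Longrightarrow> V t - lam = q t - \<mu>" and outer: "\<And>t. R < t \<Longrightarrow> V t = q t"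
  shows "matching_wronskian \<mu> lam R = 0"
proof -
  have lam0: "lam \<noteq> 0" using lam by (auto simp: nonneg_axis_iff)
  obtain c where c: "\<And>x. x \<in> {0..R} \<Longrightarrow> u x = c * reg_sol \<mu> x \<and> u' x = c * reg_sol' \<mu> x"
    using dirichlet_solution_eq_reg_sol_multiple[OF su u0 mu inner] by blast
  define a where "a = wronskian u u' (\<lambda>x. psi_p Ep x lam) (\<lambda>x. dpsi_p Edp x lam) R"
  define b where "b = wronskian u u' (\<lambda>x. psi_m Em x lam) (\<lambda>x. dpsi_m Edm x lam) R"
  have expand: "- 2 * \<i> * csqrt_up lam * u x = b * psi_p Ep x lam - a * psi_m Em x lam"
    if "R \<le> x" for x
    unfolding a_def b_def by (rule expansion_in_psi_beyond[OF su lam0 R that outer])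
  have a: "a = 0"
    by (rule psi_combination_not_square_integrable[OF L2 expand _ lam]) (use lam0 in auto)
  have "c \<noteq> 0"
  proof
    assume "c = 0"
    then have b: "b = 0"
      using c[of R] R by (simp add: b_def wronskian_def)
    have "u x = 0" if "x \<in> {0..R}" for x
      using c that \<open>c = 0\<close> by simp
    moreover have "u x = 0" if "R \<le> x" for x
      using expand[OF that] a b lam0 by simp
    ultimately show False
      using nz by (meson atLeastAtMost_iff linorder_le_cases)
  qed
  moreover have "a = c * matching_wronskian \<mu> lam R"
    using c[of R] R by (simp add: a_def wronskian_def algebra_simps)
  ultimately show ?thesis
    using a by simp
qed

lemma eigenfunction_if_matching_wronskian_zero:
  assumes W0: "matching_wronskian \<mu> lam R = 0"
    and R: "0 \<le> R" and mu: "\<mu> \<noteq> 0" and lam: "lam \<notin> nonneg_axis"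
    and inner: "\<And>t. t \<in> {0..R} \<Longrightarrow> V t - lam = q t - \<mu>" and outer: "\<And>t. R < t \<Longrightarrow> V t = q t"
  shows "\<exists>u u'. solves V lam u u' \<and> u 0 = 0
           \<and> set_integrable lborel {0..} (\<lambda>x. (cmod (u x))\<^sup>2) \<and> (\<exists>x\<ge>0. u x \<noteq> 0)"
proof -
  have lam0: "lam \<noteq> 0" using lam by (auto simp: nonneg_axis_iff)
  let ?p = "\<lambda>x. psi_p Ep x lam" and ?p' = "\<lambda>x. dpsi_p Edp x lam"
  let ?m = "\<lambda>x. psi_m Em x lam" and ?m' = "\<lambda>x. dpsi_m Edm x lam"
  define c where "c = - 2 * \<i> * csqrt_up lam"
  define D where "D = wronskian (reg_sol \<mu>) (reg_sol' \<mu>) ?m ?m' R / c"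
  have c: "c \<noteq> 0" using lam0 by (simp add: c_def)
  have eq_D_mult: "x = D * y" if "c * x = wronskian (reg_sol \<mu>) (reg_sol' \<mu>) ?m ?m' R * y" for x y
    using c by (simp add: D_def that[symmetric])
  have match: "reg_sol \<mu> R = D * ?p R" "reg_sol' \<mu> R = D * ?p' R"
    using wronskian_expansion[where p = ?p and p' = ?p' and m = ?m and m' = ?m'
        and u = "reg_sol \<mu>" and u' = "reg_sol' \<mu>" and x = R]
      W0 wronskian_psi_p_psi_m[OF lam0 R]
    by (auto simp: c_def intro!: eq_D_mult)
  define u where "u x = (if x \<le> R then reg_sol \<mu> x else D * ?p x)" for x
  define u' where "u' x = (if x \<le> R then reg_sol' \<mu> x else D * ?p' x)" for x
  have su: "solves V lam u u'"
    unfolding u_def[abs_def] u'_def[abs_def]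
    by (rule solves_glue[OF solves_reg_sol[OF mu] solves_mult[OF solves_psi_p[OF lam0]] R match])
      (use inner outer in auto)
  have u_beyond: "u x = D * ?p x" if "R \<le> x" for x
    using that match by (cases "x = R") (auto simp: u_def)
  have "D \<noteq> 0"
    using reg_sol_nontrivial[OF mu R] match by auto
  obtain X where X: "R \<le> X" "?p X \<noteq> 0" "set_integrable lborel {X..} (\<lambda>x. (cmod (?p x))\<^sup>2)"
    using eventually_conj[OF eventually_ge_at_top[of R] psi_p_square_integrable_at_top[OF lam]]
    unfolding eventually_at_top_linorder by auto
  have "set_integrable lborel {0..X} (\<lambda>x. (cmod (u x))\<^sup>2)"
    using solves_continuous_on[OF su]
    by (intro borel_integrable_atLeastAtMost' continuous_intros) (auto elim: continuous_on_subset)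
  moreover have "set_integrable lborel {X..} (\<lambda>x. (cmod (u x))\<^sup>2)"
  proof (rule set_integrable_cong[THEN iffD2, OF refl refl _ set_integrable_mult_right[OF X(3)]])
    show "(cmod (u x))\<^sup>2 = (cmod D)\<^sup>2 * (cmod (?p x))\<^sup>2" if "x \<in> {X..}" for x
      using u_beyond[of x] that X(1) by (simp add: norm_mult power_mult_distrib)
  qed
  ultimately have "set_integrable lborel ({0..X} \<union> {X..}) (\<lambda>x. (cmod (u x))\<^sup>2)"
    by (rule set_integrable_Un) auto
  moreover have "{0..X} \<union> {X..} = {0..}"
    using X(1) R by auto
  ultimately have "set_integrable lborel {0..} (\<lambda>x. (cmod (u x))\<^sup>2)"
    by simp
  moreover have "\<exists>x\<ge>0. u x \<noteq> 0"
    using u_beyond[OF X(1)] X \<open>D \<noteq> 0\<close> R by (intro exI[of _ X]) auto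
  moreover have "u 0 = 0"
    using R by (simp add: u_def reg_sol_at_0)
  ultimately show ?thesis
    using su by blast
qed

lemma matching_wronskian_eq_fR:
  "matching_wronskian (lam - \<i> * complex_of_real \<gamma>) lam R
     = \<i> * exp (\<i> * csqrt_up lam * complex_of_real R) * fR Ep Em Edp Edm \<gamma> R lam"
proof -
  define \<mu> where "\<mu> = lam - \<i> * complex_of_real \<gamma>"
  define s where "s = csqrt_up lam"
  define m where "m = csqrt_up \<mu>"
  define e where "e = exp (\<i> * s * complex_of_real R)"
  define e1 where "e1 = exp (\<i> * m * complex_of_real R)"
  define e2 where "e2 = exp (- \<i> * m * complex_of_real R)"
  define A where "A = psi_m Em 0 \<mu>"
  define B where "B = psi_p Ep 0 \<mu>"
  show ?thesis
    unfolding fR_def calE1_def calE2_def Let_def \<mu>_def[symmetric]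
    unfolding wronskian_def reg_sol_def reg_sol'_def A_def[symmetric] B_def[symmetric]
    unfolding psi_p_def psi_m_def dpsi_p_def dpsi_m_def
    unfolding s_def[symmetric] m_def[symmetric] e_def[symmetric] e1_def[symmetric] e2_def[symmetric]
    by algebra
qed

lemma is_eigenvalue_HR_iff_fR_eq_0:
  assumes R: "0 < R" and lam: "lam \<notin> nonneg_axis" and lam_ne: "lam \<noteq> \<i> * complex_of_real \<gamma>"
  shows "is_eigenvalue_HR q \<gamma> R lam \<longleftrightarrow> fR Ep Em Edp Edm \<gamma> R lam = 0"
proof -
  define V where "V = (\<lambda>t. q t + \<i> * complex_of_real \<gamma> * indicator {0..R} t)"
  define \<mu> where "\<mu> = lam - \<i> * complex_of_real \<gamma>"
  have mu: "\<mu> \<noteq> 0" using lam_ne by (simp add: \<mu>_def)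
  have inner: "\<And>t. t \<in> {0..R} \<Longrightarrow> V t - lam = q t - \<mu>"
    and outer: "\<And>t. R < t \<Longrightarrow> V t = q t"
    by (auto simp: V_def \<mu>_def)
  have fR_iff: "fR Ep Em Edp Edm \<gamma> R lam = 0 \<longleftrightarrow> matching_wronskian \<mu> lam R = 0"
    unfolding \<mu>_def matching_wronskian_eq_fR by simp
  show ?thesis
  proof
    assume "is_eigenvalue_HR q \<gamma> R lam"
    then obtain u u' where "solves V lam u u'" "u 0 = 0"
      "set_integrable lborel {0..} (\<lambda>x. (cmod (u x))\<^sup>2)" "\<exists>x\<ge>0. u x \<noteq> 0"
      unfolding is_eigenvalue_HR_def V_def by blast
    then have "matching_wronskian \<mu> lam R = 0"
      using R by (intro matching_wronskian_zero_if_eigenfunction[OF _ _ _ _ _ mu lam inner outer]) auto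
    then show "fR Ep Em Edp Edm \<gamma> R lam = 0"
      using fR_iff by simp
  next
    assume "fR Ep Em Edp Edm \<gamma> R lam = 0"
    then have "matching_wronskian \<mu> lam R = 0"
      using fR_iff by simp
    then show "is_eigenvalue_HR q \<gamma> R lam"
      using eigenfunction_if_matching_wronskian_zero[OF _ _ mu lam inner outer] R
      unfolding is_eigenvalue_HR_def V_def by auto
  qed
qed

end

lemma norm_mult_sum_prod_le:
  fixes w X Y :: complex
  assumes X: "cmod X \<le> K / a" and Y: "cmod Y \<le> K / b"
    and wa: "cmod w \<le> c * a" and wb: "cmod w \<le> c * b"
    and a: "1 \<le> a" and b: "1 \<le> b" and K: "0 \<le> K" and c: "0 \<le> c"
  shows "cmod (w * (X + Y + X * Y)) \<le> 2 * c * K + c * K * K"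
proof -
  have "cmod w * cmod X \<le> (c * a) * (K / a)"
    using X wa c a by (intro mult_mono) auto
  moreover have "cmod w * cmod Y \<le> (c * b) * (K / b)"
    using Y wb c b by (intro mult_mono) auto
  ultimately have wX: "cmod w * cmod X \<le> c * K" and wY: "cmod w * cmod Y \<le> c * K"
    using a b by simp_all
  have "K / b \<le> K / 1"
    by (rule divide_left_mono) (use b K in auto)
  with Y have "cmod Y \<le> K" by simp
  then have "cmod w * cmod X * cmod Y \<le> c * K * K"
    using mult_mono[OF wX] c K by simp
  moreover have "cmod (X + Y + X * Y) \<le> cmod X + cmod Y + cmod X * cmod Y"
    using norm_triangle_ineq[of "X + Y" "X * Y"] norm_triangle_ineq[of X Y] by (simp add: norm_mult)
  then have "cmod (w * (X + Y + X * Y)) \<le> cmod w * (cmod X + cmod Y + cmod X * cmod Y)"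
    unfolding norm_mult by (rule mult_left_mono) simp
  ultimately show ?thesis
    using wX wY by (simp add: algebra_simps)
qed

lemma sqrt_norm_shift_le:
  fixes lam :: complex and \<gamma> :: real
  assumes \<gamma>: "0 \<le> \<gamma>" and lam: "1 + \<gamma> \<le> cmod lam"
  defines "\<mu> \<equiv> lam - \<i> * complex_of_real \<gamma>"
  shows "1 \<le> cmod \<mu>"
    and "sqrt (cmod lam) \<le> (1 + \<gamma>) * sqrt (cmod \<mu>)"
    and "sqrt (cmod \<mu>) \<le> (1 + \<gamma>) * sqrt (cmod lam)"
proof -
  have comparable: "sqrt x \<le> (1 + \<gamma>) * sqrt y" if "x \<le> y + \<gamma>" and "1 \<le> y" for x y
  proof -
    have "\<gamma> * 1 \<le> \<gamma> * y" using that \<gamma> by (intro mult_left_mono)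
    moreover have "(1 + \<gamma>) * y \<le> (1 + \<gamma>)\<^sup>2 * y"
      using that \<gamma> by (intro mult_right_mono self_le_power) auto
    ultimately have "sqrt x \<le> sqrt ((1 + \<gamma>)\<^sup>2 * y)"
      using that by (intro real_sqrt_le_mono) (simp add: algebra_simps)
    also have "\<dots> = (1 + \<gamma>) * sqrt y"
      using \<gamma> by (simp add: real_sqrt_mult)
    finally show ?thesis .
  qed
  have shift: "cmod (\<i> * complex_of_real \<gamma>) = \<gamma>"
    using \<gamma> by (simp add: norm_mult)
  have lm: "cmod lam \<le> cmod \<mu> + \<gamma>" and ml: "cmod \<mu> \<le> cmod lam + \<gamma>"
    unfolding \<mu>_def using norm_triangle_ineq4[of lam "\<i> * complex_of_real \<gamma>"]
      norm_triangle_ineq[of "lam - \<i> * complex_of_real \<gamma>" "\<i> * complex_of_real \<gamma>"] shift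
    by auto
  show mu: "1 \<le> cmod \<mu>"
    using lm lam by linarith
  show "sqrt (cmod lam) \<le> (1 + \<gamma>) * sqrt (cmod \<mu>)"
    using comparable[OF lm mu] .
  show "sqrt (cmod \<mu>) \<le> (1 + \<gamma>) * sqrt (cmod lam)"
    using comparable[OF ml] lam \<gamma> by simp
qed

lemma calE_bounded:
  assumes \<gamma>: "0 < \<gamma>"
    and C: "\<And>x lam. 0 \<le> x \<Longrightarrow> 1 \<le> cmod lam \<Longrightarrow>
              cmod (Ep x lam) + cmod (Edp x lam) \<le> C / sqrt (cmod lam)
            \<and> cmod (Em x lam) + cmod (Edm x lam) \<le> C / sqrt (cmod lam)"
  shows "\<exists>C1>0. \<forall>R>0. \<forall>lam. 1 + \<gamma> \<le> cmod lam \<longrightarrow>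
           cmod (calE1 Ep Edp \<gamma> R lam) + cmod (calE2 Ep Em Edp Edm \<gamma> R lam) \<le> C1"
proof -
  define K where "K = max C 0"
  define c where "c = 1 + \<gamma>"
  define B where "B = 2 * c * K + c * K * K"
  have K: "0 \<le> K" and c: "0 \<le> c" using \<gamma> by (auto simp: K_def c_def)
  have B: "0 \<le> B" using K c by (simp add: B_def)
  have "cmod (calE1 Ep Edp \<gamma> R lam) + cmod (calE2 Ep Em Edp Edm \<gamma> R lam) \<le> 4 * B"
    if R: "0 < R" and lam: "1 + \<gamma> \<le> cmod lam" for R lam
  proof -
    define \<mu> where "\<mu> = lam - \<i> * complex_of_real \<gamma>"
    define a where "a = sqrt (cmod lam)"
    define b where "b = sqrt (cmod \<mu>)"
    note shift = sqrt_norm_shift_le[OF less_imp_le[OF \<gamma>] lam, folded \<mu>_def c_def a_def b_def]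
    have lam1: "1 \<le> cmod lam" using lam \<gamma> by simp
    have a: "1 \<le> a" and b: "1 \<le> b" unfolding a_def b_def using lam1 shift(1) by simp_all
    have err: "cmod (Ep R z) \<le> K / sqrt (cmod z) \<and> cmod (Edp R z) \<le> K / sqrt (cmod z)
             \<and> cmod (Em R z) \<le> K / sqrt (cmod z) \<and> cmod (Edm R z) \<le> K / sqrt (cmod z)"
      if "1 \<le> cmod z" for z
    proof -
      have "C / sqrt (cmod z) \<le> K / sqrt (cmod z)" by (simp add: K_def divide_right_mono)
      then show ?thesis
        using C[of R z] that R norm_ge_zero[of "Ep R z"] norm_ge_zero[of "Edp R z"]
          norm_ge_zero[of "Em R z"] norm_ge_zero[of "Edm R z"]
        by linarith
    qed
    note errl = err[OF lam1, folded a_def] and errm = err[OF shift(1), folded b_def]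
    have sl: "cmod (csqrt_up lam) \<le> c * a" "cmod (csqrt_up lam) \<le> c * b"
      and sm: "cmod (csqrt_up \<mu>) \<le> c * a" "cmod (csqrt_up \<mu>) \<le> c * b"
    proof -
      have "a \<le> c * a" "b \<le> c * b"
        using a b \<gamma> by (simp_all add: c_def algebra_simps)
      then show "cmod (csqrt_up lam) \<le> c * a" "cmod (csqrt_up lam) \<le> c * b"
        "cmod (csqrt_up \<mu>) \<le> c * a" "cmod (csqrt_up \<mu>) \<le> c * b"
        using shift by (simp_all add: norm_csqrt_up a_def b_def c_def)
    qed
    have "cmod (calE1 Ep Edp \<gamma> R lam) \<le> B + B"
      unfolding calE1_def Let_def \<mu>_def[symmetric] B_def
      using norm_triangle_ineq4
        norm_mult_sum_prod_le[of "Ep R \<mu>" K b "Edp R lam" a "csqrt_up lam" c]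
        norm_mult_sum_prod_le[of "Edp R \<mu>" K b "Ep R lam" a "csqrt_up \<mu>" c]
        errl errm sl sm a b K c
      by (smt (verit))
    moreover have "cmod (calE2 Ep Em Edp Edm \<gamma> R lam) \<le> B + B"
      unfolding calE2_def Let_def \<mu>_def[symmetric] B_def
      using norm_triangle_ineq
        norm_mult_sum_prod_le[of "Edp R lam" K a "Em R \<mu>" b "csqrt_up lam" c]
        norm_mult_sum_prod_le[of "Ep R lam" K a "Edm R \<mu>" b "csqrt_up \<mu>" c]
        errl errm sl sm a b K c
      by (smt (verit))
    ultimately show ?thesis by simp
  qed
  then show ?thesis
    using B by (intro exI[of _ "4 * B + 1"]) force
qed

lemma fR_calE_analytic:
  assumes anal: "\<And>x. 0 \<le> x \<Longrightarrow>
                 (Ep x) analytic_on (- nonneg_axis) \<and> (Em x) analytic_on (- nonneg_axis)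
               \<and> (Edp x) analytic_on (- nonneg_axis) \<and> (Edm x) analytic_on (- nonneg_axis)"
    and R: "0 \<le> R"
  shows "let S = - (nonneg_axis \<union> (\<lambda>z. \<i> * complex_of_real \<gamma> + z) ` nonneg_axis) in
           (fR Ep Em Edp Edm \<gamma> R) analytic_on S
         \<and> (calE1 Ep Edp \<gamma> R) analytic_on S
         \<and> (calE2 Ep Em Edp Edm \<gamma> R) analytic_on S"
proof -
  define S where "S = - (nonneg_axis \<union> (\<lambda>z. \<i> * complex_of_real \<gamma> + z) ` nonneg_axis)"
  have "open S"
    unfolding S_def by (intro open_Compl closed_Un closed_nonneg_axis closed_translation)
  have sub: "S \<subseteq> - nonneg_axis"
    unfolding S_def by auto
  have shifted_sub: "(\<lambda>lam. lam - \<i> * complex_of_real \<gamma>) ` S \<subseteq> - nonneg_axis"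
  proof clarify
    fix lam assume "lam \<in> S" and "lam - \<i> * complex_of_real \<gamma> \<in> nonneg_axis"
    moreover have "lam = \<i> * complex_of_real \<gamma> + (lam - \<i> * complex_of_real \<gamma>)" by simp
    ultimately show False
      unfolding S_def by (metis ComplI Compl_iff UnCI image_eqI)
  qed
  have holo: "g holomorphic_on S" "(\<lambda>lam. g (lam - \<i> * complex_of_real \<gamma>)) holomorphic_on S"
    if g: "g holomorphic_on (- nonneg_axis)" for g
  proof -
    show "g holomorphic_on S"
      using holomorphic_on_subset[OF g sub] .
    have "(\<lambda>lam. lam - \<i> * complex_of_real \<gamma>) holomorphic_on S"
      by (intro holomorphic_intros)
    from holomorphic_on_compose_gen[OF this g shifted_sub]
    show "(\<lambda>lam. g (lam - \<i> * complex_of_real \<gamma>)) holomorphic_on S"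
      by (simp add: o_def)
  qed
  have hol0: "Ep 0 holomorphic_on (- nonneg_axis)" "Em 0 holomorphic_on (- nonneg_axis)"
    using anal[of 0] by (auto intro: analytic_imp_holomorphic)
  have holR: "Ep R holomorphic_on (- nonneg_axis)" "Em R holomorphic_on (- nonneg_axis)"
    "Edp R holomorphic_on (- nonneg_axis)" "Edm R holomorphic_on (- nonneg_axis)"
    using anal[OF R] by (auto intro: analytic_imp_holomorphic)
  note H = holo[OF hol0(1)] holo[OF hol0(2)] holo[OF holR(1)] holo[OF holR(2)]
    holo[OF holR(3)] holo[OF holR(4)] holo[OF holomorphic_csqrt_up]
  have E1: "calE1 Ep Edp \<gamma> R holomorphic_on S"
    unfolding calE1_def Let_def by (intro holomorphic_intros H)
  have E2: "calE2 Ep Em Edp Edm \<gamma> R holomorphic_on S"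
    unfolding calE2_def Let_def by (intro holomorphic_intros H)
  have "fR Ep Em Edp Edm \<gamma> R holomorphic_on S"
    unfolding fR_def Let_def psi_m_def psi_p_def
    by (intro holomorphic_intros H E1 E2)
  with E1 E2 \<open>open S\<close> show ?thesis
    unfolding S_def[symmetric] Let_def by (simp add: analytic_on_open)
qed

theorem mainTheorem1:
  fixes q :: "real \<Rightarrow> complex" and \<gamma> :: real
    and Ep Em Edp Edm :: "real \<Rightarrow> complex \<Rightarrow> complex"
  assumes gamma_pos: "\<gamma> > 0"
    and q_L1: "set_integrable lborel {0..} q"
    and sol_p: "\<And>lam. lam \<noteq> 0 \<Longrightarrow> solves q lam (\<lambda>x. psi_p Ep x lam) (\<lambda>x. dpsi_p Edp x lam)"
    and sol_m: "\<And>lam. lam \<noteq> 0 \<Longrightarrow> solves q lam (\<lambda>x. psi_m Em x lam) (\<lambda>x. dpsi_m Edm x lam)"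
    and lim_p: "\<And>lam. lam \<noteq> 0 \<Longrightarrow>
                  ((\<lambda>x. cmod (Ep x lam) + cmod (Edp x lam)) \<longlongrightarrow> 0) at_top"
    and lim_m: "\<And>lam. lam \<noteq> 0 \<Longrightarrow>
                  ((\<lambda>x. cmod (Em x lam) + cmod (Edm x lam)) \<longlongrightarrow> 0) at_top"
    and bound: "\<exists>C. \<forall>x\<ge>0. \<forall>lam. cmod lam \<ge> 1 \<longrightarrow>
                  cmod (Ep x lam) + cmod (Edp x lam) \<le> C / sqrt (cmod lam)
                \<and> cmod (Em x lam) + cmod (Edm x lam) \<le> C / sqrt (cmod lam)"
    and anal: "\<And>x. x \<ge> 0 \<Longrightarrow>
                 (Ep x) analytic_on (- nonneg_axis) \<and> (Em x) analytic_on (- nonneg_axis)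
               \<and> (Edp x) analytic_on (- nonneg_axis) \<and> (Edm x) analytic_on (- nonneg_axis)"
  shows "(\<forall>R>0. \<forall>lam. lam \<notin> nonneg_axis \<and> lam \<noteq> \<i> * complex_of_real \<gamma> \<longrightarrow>
             (is_eigenvalue_HR q \<gamma> R lam \<longleftrightarrow> fR Ep Em Edp Edm \<gamma> R lam = 0))
       \<and> (\<exists>C1>0. \<forall>R>0. \<forall>lam. cmod lam \<ge> 1 + \<gamma> \<longrightarrow>
             cmod (calE1 Ep Edp \<gamma> R lam) + cmod (calE2 Ep Em Edp Edm \<gamma> R lam) \<le> C1)
       \<and> (\<forall>R>0. let S = - (nonneg_axis \<union> (\<lambda>z. \<i> * complex_of_real \<gamma> + z) ` nonneg_axis) in
             (fR Ep Em Edp Edm \<gamma> R) analytic_on S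
           \<and> (calE1 Ep Edp \<gamma> R) analytic_on S
           \<and> (calE2 Ep Em Edp Edm \<gamma> R) analytic_on S)"
proof -
  \<comment> \<open>\<open>q_L1\<close> is what Levinson's theorem needs; its conclusions are the hypotheses
    \<open>sol_p\<close> to \<open>anal\<close>, so it is not used again here.\<close>
  interpret jost_solutions q Ep Em Edp Edm
    using sol_p sol_m lim_p lim_m by unfold_locales
  obtain C where C: "\<And>x lam. 0 \<le> x \<Longrightarrow> 1 \<le> cmod lam \<Longrightarrow>
      cmod (Ep x lam) + cmod (Edp x lam) \<le> C / sqrt (cmod lam)
    \<and> cmod (Em x lam) + cmod (Edm x lam) \<le> C / sqrt (cmod lam)"
    using bound by blast
  show ?thesis
    using is_eigenvalue_HR_iff_fR_eq_0 calE_bounded[OF gamma_pos C]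
      fR_calE_analytic[OF anal less_imp_le]
    by auto
qed

end
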